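(* For all $m = 1,2,\ldots$ and all $r = 0,1,\ldots,m$, the stopping redundancy of the binary Reed–Muller code $\mathcal{R}(r,m)$ satisfies $$\rho(\mathcal{R}(r,m)) \le \sum_{i=0}^{m-r-1} \binom{r+i}{i} 2^i.$$
   Context: The binary Reed–Muller code $\mathcal{R}(r,m)$ of order $r$ and length $2^m$ is the row space of $G(r,m)$, where $G(m,m) = I_{2^m}$, $G(0,m) = (11\cdots1)$, and for $0<r<m$, $G(r,m) = \begin{pmatrix} G(r,m-1) & G(r,m-1) \\ \mathbf{0} & G(r-1,m-1)\end{pmatrix}$; its minimum distance is $2^{m-r}$. A parity-check matrix for a linear code $\mathcal{C}$ is any matrix (possibly with linearly dependent rows) whose rows span $\mathcal{C}^\perp$. For a parity-check matrix $H$, the stopping distance $s(H)$ is the largest integer such that for every set of $s(H)-1$ or fewer columns of $H$, the projection of $H$ onto those columns contains at least one row of Hamming weight exactly one. The stopping redundancy $\rho(\mathcal{C})$ is the smallest number of rows of a parity-check matrix $H$ for $\mathcal{C}$ with $s(H)$ equal to the minimum distance of $\mathcal{C}$. *)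

theory Defs
  imports Main
begin

text \<open>Binary words of length n are bool lists (True = 1, False = 0).\<close>

definition identity_rows :: "nat \<Rightarrow> bool list list" where
  "identity_rows n = map (\<lambda>i. map (\<lambda>j. i = j) [0..<n]) [0..<n]"

fun RM_gen :: "nat \<Rightarrow> nat \<Rightarrow> bool list list" where
  "RM_gen r 0 = (if r = 0 then [[True]] else [])"
| "RM_gen r (Suc m) =
     (if r = Suc m then identity_rows (2 ^ Suc m)
      else if r = 0 then [replicate (2 ^ Suc m) True]
      else if r < Suc m then
        map (\<lambda>u. u @ u) (RM_gen r m) @ map (\<lambda>v. replicate (2 ^ m) False @ v) (RM_gen (r - 1) m)
      else [])"

definition row_space :: "nat \<Rightarrow> bool list list \<Rightarrow> bool list set" where
  "row_space n rows =
     {v. \<exists>c :: nat \<Rightarrow> bool.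
           v = map (\<lambda>j. odd (card {i. i < length rows \<and> c i \<and> rows ! i ! j})) [0..<n]}"

definition RM_code :: "nat \<Rightarrow> nat \<Rightarrow> bool list set" where
  "RM_code r m = row_space (2 ^ m) (RM_gen r m)"

definition gf2_inner :: "bool list \<Rightarrow> bool list \<Rightarrow> bool" where
  "gf2_inner u v = odd (card {i. i < length u \<and> u ! i \<and> v ! i})"

definition dual_code :: "nat \<Rightarrow> bool list set \<Rightarrow> bool list set" where
  "dual_code n C = {v. length v = n \<and> (\<forall>c\<in>C. \<not> gf2_inner c v)}"

definition hweight :: "bool list \<Rightarrow> nat" where
  "hweight v = length (filter id v)"

definition min_distance :: "nat \<Rightarrow> bool list set \<Rightarrow> nat" where
  "min_distance n C = (LEAST w. \<exists>c\<in>C. c \<noteq> replicate n False \<and> hweight c = w)"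

text \<open>H (list of rows, possibly dependent) is a parity-check matrix for the length-n code C.\<close>
definition is_parity_check :: "nat \<Rightarrow> bool list set \<Rightarrow> bool list list \<Rightarrow> bool" where
  "is_parity_check n C H \<longleftrightarrow> (\<forall>h\<in>set H. length h = n) \<and> row_space n H = dual_code n C"

definition stop_ok :: "nat \<Rightarrow> bool list list \<Rightarrow> nat \<Rightarrow> bool" where
  "stop_ok n H s \<longleftrightarrow>
     (\<forall>S. S \<subseteq> {..<n} \<and> S \<noteq> {} \<and> card S \<le> s - 1 \<longrightarrow>
          (\<exists>h\<in>set H. card {j\<in>S. h ! j} = 1))"

definition stopping_distance_is :: "nat \<Rightarrow> bool list list \<Rightarrow> nat \<Rightarrow> bool" where
  "stopping_distance_is n H d \<longleftrightarrow> stop_ok n H d \<and> \<not> stop_ok n H (Suc d)"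

definition stopping_redundancy :: "nat \<Rightarrow> bool list set \<Rightarrow> nat" where
  "stopping_redundancy n C =
     (LEAST k. \<exists>H. length H = k \<and> is_parity_check n C H \<and>
                   stopping_distance_is n H (min_distance n C))"

end

theory Submission
  imports Defs
begin

text \<open>
  By Plotkin's description \<open>\<R>(r, m + 1) = {(u | u + v) | u \<in> \<R>(r, m), v \<in> \<R>(r - 1, m)}\<close>, a word
  \<open>(a | b)\<close> is orthogonal to \<open>\<R>(r, m + 1)\<close> iff \<open>a + b\<close> is orthogonal to \<open>\<R>(r, m)\<close> and \<open>b\<close> to
  \<open>\<R>(r - 1, m)\<close>. Hence the dual of \<open>\<R>(r, m + 1)\<close> is spanned by the rows of the block matrix
  \<open>H(r, m + 1) = [H(r, m) 0; 0 H(r, m); H(r - 1, m) H(r - 1, m)]\<close>, starting from the empty matrix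
  \<open>H(m, m)\<close> and using the single row \<open>(e\<^sub>0 | e\<^sub>0)\<close> as last block when \<open>r = 0\<close>. Its number of
  rows obeys the recursion of the binomial sum \<open>\<Sum>i<m - r. (r + i choose i) 2\<^sup>i\<close>.

  A nonempty set of fewer than \<open>2\<^bsup>m + 1 - r\<^esup>\<close> columns either meets a half in a nonempty set of
  fewer than \<open>2\<^bsup>m - r\<^esup>\<close> columns, and induction gives a row of weight one in the first two blocks,
  or it lies inside one half, where the last block applies (for \<open>r = 0\<close> that half is full and
  \<open>e\<^sub>0\<close> meets it once). As the support of a minimum-weight codeword, of weight at most
  \<open>2\<^bsup>m - r\<^esup>\<close>, is always a stopping set, \<open>H(r, m)\<close> has stopping distance equal to the
  minimum distance.
\<close>

definition gf2_add :: "bool list \<Rightarrow> bool list \<Rightarrow> bool list" where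
  "gf2_add u v = map (\<lambda>j. u ! j \<noteq> v ! j) [0..<length u]"

abbreviation gf2_zero :: "nat \<Rightarrow> bool list" where
  "gf2_zero n \<equiv> replicate n False"

lemma length_gf2_add [simp]: "length (gf2_add u v) = length u"
  by (simp add: gf2_add_def)

lemma nth_gf2_add [simp]: "j < length u \<Longrightarrow> gf2_add u v ! j = (u ! j \<noteq> v ! j)"
  by (simp add: gf2_add_def)

lemma gf2_add_zero_left [simp]: "length v = n \<Longrightarrow> gf2_add (gf2_zero n) v = v"
  by (rule nth_equalityI) auto

lemma gf2_add_zero_right [simp]: "length v = n \<Longrightarrow> gf2_add v (gf2_zero n) = v"
  by (rule nth_equalityI) auto

lemma gf2_add_self [simp]: "gf2_add u u = gf2_zero (length u)"
  by (rule nth_equalityI) auto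

lemma gf2_add_cancel [simp]: "length u = length v \<Longrightarrow> gf2_add (gf2_add u v) v = u"
  by (rule nth_equalityI) auto

lemma gf2_add_append: "length a = length c \<Longrightarrow> gf2_add (a @ b) (c @ d) = gf2_add a c @ gf2_add b d"
  by (rule nth_equalityI) (auto simp: nth_append)

lemma obtain_halves:
  assumes "length w = 2 * n"
  obtains a b where "w = a @ b" "length a = n" "length b = n"
  using assms by (intro that[of "take n w" "drop n w"]) auto

fun gf2_span :: "nat \<Rightarrow> bool list list \<Rightarrow> bool list set" where
  "gf2_span n [] = {gf2_zero n}"
| "gf2_span n (h # hs) = gf2_span n hs \<union> gf2_add h ` gf2_span n hs"

lemma length_gf2_span: "\<forall>h\<in>set hs. length h = n \<Longrightarrow> v \<in> gf2_span n hs \<Longrightarrow> length v = n"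
  by (induction hs arbitrary: v) auto

lemma zero_in_gf2_span: "gf2_zero n \<in> gf2_span n hs"
  by (induction hs) auto

lemma gf2_add_in_gf2_span:
  assumes "\<forall>h\<in>set hs. length h = n" "a \<in> gf2_span n hs" "b \<in> gf2_span n hs"
  shows "gf2_add a b \<in> gf2_span n hs"
  using assms
proof (induction hs arbitrary: a b)
  case (Cons h hs)
  have rows: "\<forall>g\<in>set hs. length g = n" and len_h: "length h = n"
    using Cons.prems(1) by simp_all
  note len_span = length_gf2_span[OF rows]
  obtain a' where a': "a' \<in> gf2_span n hs" "a = a' \<or> a = gf2_add h a'"
    using Cons.prems(2) by fastforce
  obtain b' where b': "b' \<in> gf2_span n hs" "b = b' \<or> b = gf2_add h b'"
    using Cons.prems(3) by fastforce
  have sum: "gf2_add a' b' \<in> gf2_span n hs"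
    using Cons.IH[OF rows a'(1) b'(1)] .
  have "gf2_add a b = gf2_add a' b' \<or> gf2_add a b = gf2_add h (gf2_add a' b')"
    using a' b' len_h len_span by (auto intro!: nth_equalityI)
  then show ?case
    using sum by auto
qed simp

lemma row_in_gf2_span: "\<forall>g\<in>set hs. length g = n \<Longrightarrow> h \<in> set hs \<Longrightarrow> h \<in> gf2_span n hs"
proof (induction hs)
  case (Cons g hs)
  have "gf2_add g (gf2_zero n) \<in> gf2_span n (g # hs)"
    using zero_in_gf2_span by auto
  then show ?case
    using Cons by auto
qed simp

lemma gf2_span_least:
  "gf2_zero n \<in> V \<Longrightarrow> (\<And>a b. a \<in> V \<Longrightarrow> b \<in> V \<Longrightarrow> gf2_add a b \<in> V) \<Longrightarrow> set hs \<subseteq> V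
    \<Longrightarrow> gf2_span n hs \<subseteq> V"
  by (induction hs) auto

lemma gf2_span_mono:
  "\<forall>h\<in>set B. length h = n \<Longrightarrow> set A \<subseteq> set B \<Longrightarrow> gf2_span n A \<subseteq> gf2_span n B"
  by (rule gf2_span_least) (simp_all add: zero_in_gf2_span gf2_add_in_gf2_span row_in_gf2_span subset_iff)

lemma gf2_span_append:
  assumes A: "\<forall>h\<in>set A. length h = n" and B: "\<forall>h\<in>set B. length h = n"
  shows "gf2_span n (A @ B) = {gf2_add a b | a b. a \<in> gf2_span n A \<and> b \<in> gf2_span n B}"
    (is "_ = ?V")
proof
  show "gf2_span n (A @ B) \<subseteq> ?V"
  proof (rule gf2_span_least)
    have "gf2_zero n = gf2_add (gf2_zero n) (gf2_zero n)"
      by simp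
    then show "gf2_zero n \<in> ?V"
      using zero_in_gf2_span by fast
  next
    fix x y assume "x \<in> ?V" "y \<in> ?V"
    then obtain a b a' b' where
      ab: "x = gf2_add a b" "a \<in> gf2_span n A" "b \<in> gf2_span n B" and
      ab': "y = gf2_add a' b'" "a' \<in> gf2_span n A" "b' \<in> gf2_span n B"
      by blast
    have "length a = n" "length a' = n" "length b = n" "length b' = n"
      using ab ab' A B length_gf2_span by blast+
    then have "gf2_add x y = gf2_add (gf2_add a a') (gf2_add b b')"
      using ab(1) ab'(1) by (auto intro!: nth_equalityI)
    moreover have "gf2_add a a' \<in> gf2_span n A" "gf2_add b b' \<in> gf2_span n B"
      using ab ab' A B by (simp_all add: gf2_add_in_gf2_span)
    ultimately show "gf2_add x y \<in> ?V"
      by fast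
  next
    have "h = gf2_add h (gf2_zero n)" "h \<in> gf2_span n A" if "h \<in> set A" for h
      using that A by (simp_all add: row_in_gf2_span)
    moreover have "h = gf2_add (gf2_zero n) h" "h \<in> gf2_span n B" if "h \<in> set B" for h
      using that B by (simp_all add: row_in_gf2_span)
    ultimately show "set (A @ B) \<subseteq> ?V"
      using zero_in_gf2_span[of n A] zero_in_gf2_span[of n B] by (auto; blast)
  qed
next
  have "\<forall>h\<in>set (A @ B). length h = n"
    using A B by auto
  moreover from this have "gf2_span n A \<subseteq> gf2_span n (A @ B)" "gf2_span n B \<subseteq> gf2_span n (A @ B)"
    by (simp_all add: gf2_span_mono)
  ultimately show "?V \<subseteq> gf2_span n (A @ B)"
    using gf2_add_in_gf2_span by blast
qed

lemma gf2_span_map: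
  assumes A: "\<forall>h\<in>set A. length h = n"
    and length_f: "\<And>a. length a = n \<Longrightarrow> length (f a) = n'"
    and f_zero: "f (gf2_zero n) = gf2_zero n'"
    and f_add: "\<And>a b. length a = n \<Longrightarrow> length b = n \<Longrightarrow> f (gf2_add a b) = gf2_add (f a) (f b)"
  shows "gf2_span n' (map f A) = f ` gf2_span n A"
  using A
proof (induction A)
  case (Cons h A)
  have "gf2_add (f h) ` f ` gf2_span n A = f ` gf2_add h ` gf2_span n A"
    using Cons.prems length_gf2_span[of A n] by (force simp: f_add)
  then show ?case
    using Cons by (simp add: image_Un)
qed (simp add: f_zero)

lemma gf2_zero_append_self: "gf2_zero n @ gf2_zero n = gf2_zero (2 * n)"
  by (simp add: replicate_add[symmetric] mult_2)

lemma gf2_span_double: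
  "\<forall>h\<in>set A. length h = n \<Longrightarrow> gf2_span (2 * n) (map (\<lambda>x. x @ x) A) = (\<lambda>x. x @ x) ` gf2_span n A"
  by (rule gf2_span_map) (simp_all add: gf2_add_append gf2_zero_append_self)

lemma gf2_span_pad_left:
  "\<forall>h\<in>set A. length h = n \<Longrightarrow>
    gf2_span (2 * n) (map (\<lambda>y. gf2_zero n @ y) A) = (\<lambda>y. gf2_zero n @ y) ` gf2_span n A"
  by (rule gf2_span_map) (simp_all add: gf2_add_append gf2_zero_append_self)

lemma gf2_span_pad_right:
  "\<forall>h\<in>set A. length h = n \<Longrightarrow>
    gf2_span (2 * n) (map (\<lambda>y. y @ gf2_zero n) A) = (\<lambda>y. y @ gf2_zero n) ` gf2_span n A"
  by (rule gf2_span_map) (simp_all add: gf2_add_append gf2_zero_append_self)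

lemma gf2_span_plotkin:
  assumes A: "\<forall>h\<in>set A. length h = n" and B: "\<forall>h\<in>set B. length h = n"
  shows "gf2_span (2 * n) (map (\<lambda>u. u @ u) A @ map (\<lambda>v. gf2_zero n @ v) B) =
    {u @ gf2_add u v | u v. u \<in> gf2_span n A \<and> v \<in> gf2_span n B}"
proof -
  have sum: "gf2_add (u @ u) (gf2_zero n @ v) = u @ gf2_add u v" if "u \<in> gf2_span n A" for u v
    using length_gf2_span[OF A that] by (simp add: gf2_add_append)
  have "gf2_span (2 * n) (map (\<lambda>u. u @ u) A @ map (\<lambda>v. gf2_zero n @ v) B) =
      {gf2_add a b | a b. a \<in> (\<lambda>u. u @ u) ` gf2_span n A \<and> b \<in> (\<lambda>v. gf2_zero n @ v) ` gf2_span n B}"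
    using A B by (subst gf2_span_append) (simp_all add: gf2_span_double gf2_span_pad_left)
  also have "\<dots> = {u @ gf2_add u v | u v. u \<in> gf2_span n A \<and> v \<in> gf2_span n B}"
    (is "?L = ?R")
  proof (intro equalityI subsetI)
    fix x assume "x \<in> ?L"
    then show "x \<in> ?R"
      using sum by blast
  next
    fix x assume "x \<in> ?R"
    then obtain u v where "u \<in> gf2_span n A" "v \<in> gf2_span n B" "x = u @ gf2_add u v"
      by blast
    then show "x \<in> ?L"
      using sum[symmetric] by blast
  qed
  finally show ?thesis .
qed

lemma card_less_Suc_split:
  "card {i. i < Suc L \<and> P i} = (if P 0 then 1 else 0) + card {i. i < L \<and> P (Suc i)}"
proof -
  have "{i. i < Suc L \<and> P i} = (if P 0 then {0} else {}) \<union> Suc ` {i. i < L \<and> P (Suc i)}"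
    by (auto simp: less_Suc_eq_0_disj)
  moreover have "card (Suc ` {i. i < L \<and> P (Suc i)}) = card {i. i < L \<and> P (Suc i)}"
    by (rule card_image) auto
  ultimately show ?thesis
    by (auto simp: card_insert_if)
qed

definition row_comb :: "nat \<Rightarrow> bool list list \<Rightarrow> (nat \<Rightarrow> bool) \<Rightarrow> bool list" where
  "row_comb n rows c = map (\<lambda>j. odd (card {i. i < length rows \<and> c i \<and> rows ! i ! j})) [0..<n]"

lemma row_comb_Cons:
  "length h = n \<Longrightarrow>
    row_comb n (h # hs) c = (if c 0 then gf2_add h else id) (row_comb n hs (c \<circ> Suc))"
  by (rule nth_equalityI) (auto simp: row_comb_def card_less_Suc_split)

lemma row_space_eq_gf2_span: "\<forall>h\<in>set rows. length h = n \<Longrightarrow> row_space n rows = gf2_span n rows"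
proof (induction rows)
  case Nil
  then show ?case
    by (auto simp: row_space_def map_replicate_const)
next
  case (Cons h hs)
  have len_h: "length h = n" and IH: "range (row_comb n hs) = gf2_span n hs"
    using Cons by (auto simp: row_space_def row_comb_def[abs_def] image_def)
  have "range (row_comb n (h # hs)) = gf2_span n (h # hs)"
  proof
    show "range (row_comb n (h # hs)) \<subseteq> gf2_span n (h # hs)"
    proof
      fix v assume "v \<in> range (row_comb n (h # hs))"
      then obtain c where "v = row_comb n (h # hs) c"
        by blast
      moreover have "row_comb n hs (c \<circ> Suc) \<in> gf2_span n hs"
        using IH by blast
      ultimately show "v \<in> gf2_span n (h # hs)"
        by (simp add: row_comb_Cons[OF len_h])
    qed
  next
    show "gf2_span n (h # hs) \<subseteq> range (row_comb n (h # hs))"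
    proof
      fix v assume "v \<in> gf2_span n (h # hs)"
      then have "v \<in> gf2_span n hs \<union> gf2_add h ` gf2_span n hs"
        by simp
      then obtain w b where w: "w \<in> gf2_span n hs" "v = (if b then gf2_add h else id) w"
        by (metis (full_types) UnE id_apply image_iff)
      then obtain c where c: "w = row_comb n hs c"
        using IH by auto
      have "v = row_comb n (h # hs) (case_nat b c)"
        using w c by (simp add: row_comb_Cons[OF len_h] comp_def)
      then show "v \<in> range (row_comb n (h # hs))"
        by blast
    qed
  qed
  then show ?case
    by (simp add: row_space_def row_comb_def[abs_def] image_def)
qed

lemma gf2_inner_commute: "length u = length v \<Longrightarrow> gf2_inner u v = gf2_inner v u"
  unfolding gf2_inner_def by (metis (no_types, lifting) Collect_cong)

lemma gf2_inner_zero_left [simp]: "gf2_inner (gf2_zero n) v = False"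
proof -
  have empty: "{i. i < n \<and> gf2_zero n ! i \<and> v ! i} = {}"
    by auto
  show ?thesis
    unfolding gf2_inner_def length_replicate empty by simp
qed

lemma gf2_inner_zero_right [simp]: "gf2_inner u (gf2_zero (length u)) = False"
proof -
  have empty: "{i. i < length u \<and> u ! i \<and> gf2_zero (length u) ! i} = {}"
    by auto
  show ?thesis
    unfolding gf2_inner_def empty by simp
qed

lemma gf2_inner_append:
  assumes "length a = length c"
  shows "gf2_inner (a @ b) (c @ d) = (gf2_inner a c \<noteq> gf2_inner b d)"
proof -
  let ?A = "{i. i < length a \<and> a ! i \<and> c ! i}" and ?B = "{i. i < length b \<and> b ! i \<and> d ! i}"
  have "{i. i < length (a @ b) \<and> (a @ b) ! i \<and> (c @ d) ! i} = ?A \<union> (\<lambda>i. i + length a) ` ?B"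
  proof (rule set_eqI)
    fix i
    show "i \<in> {i. i < length (a @ b) \<and> (a @ b) ! i \<and> (c @ d) ! i} \<longleftrightarrow> i \<in> ?A \<union> (\<lambda>i. i + length a) ` ?B"
      using assms by (cases "i < length a") (auto simp: nth_append image_iff intro!: exI[of _ "i - length a"])
  qed
  moreover have "card (?A \<union> (\<lambda>i. i + length a) ` ?B) = card ?A + card ?B"
    by (subst card_Un_disjoint) (auto simp: card_image inj_on_def)
  ultimately show ?thesis
    unfolding gf2_inner_def by simp
qed

lemma gf2_inner_add_right:
  assumes "length v = length u" "length w = length u"
  shows "gf2_inner u (gf2_add v w) = (gf2_inner u v \<noteq> gf2_inner u w)"
proof -
  define A where "A = {i. i < length u \<and> u ! i \<and> v ! i}"
  define B where "B = {i. i < length u \<and> u ! i \<and> w ! i}"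
  have fin: "finite A" "finite B"
    by (auto simp: A_def B_def)
  have "{i. i < length u \<and> u ! i \<and> gf2_add v w ! i} = (A - B) \<union> (B - A)"
    using assms by (auto simp: A_def B_def)
  moreover have "card ((A - B) \<union> (B - A)) = card (A - B) + card (B - A)"
    by (rule card_Un_disjoint) (use fin in auto)
  ultimately have "gf2_inner u (gf2_add v w) = odd (card (A - B) + card (B - A))"
    by (simp add: gf2_inner_def)
  moreover have "gf2_inner u v = odd (card A)" "gf2_inner u w = odd (card B)"
    using assms by (simp_all add: gf2_inner_def A_def B_def)
  moreover have "card A = card (A - B) + card (A \<inter> B)" "card B = card (B - A) + card (A \<inter> B)"
    using fin card_Int_Diff[of A B] card_Int_Diff[of B A] by (simp_all add: Int_commute)
  ultimately show ?thesis
    by presburger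
qed

lemma gf2_inner_add_left:
  assumes "length v = length u" "length w = length u"
  shows "gf2_inner (gf2_add v w) u = (gf2_inner v u \<noteq> gf2_inner w u)"
proof -
  have "gf2_inner (gf2_add v w) u = gf2_inner u (gf2_add v w)"
    using assms by (intro gf2_inner_commute) simp
  also have "\<dots> = (gf2_inner u v \<noteq> gf2_inner u w)"
    using assms by (rule gf2_inner_add_right)
  also have "\<dots> = (gf2_inner v u \<noteq> gf2_inner w u)"
    using assms gf2_inner_commute[of u v] gf2_inner_commute[of u w] by simp
  finally show ?thesis .
qed

lemma dual_code_gf2_span:
  assumes "\<forall>h\<in>set G. length h = n"
  shows "dual_code n (gf2_span n G) = {x. length x = n \<and> (\<forall>h\<in>set G. \<not> gf2_inner h x)}"
proof -
  have "gf2_span n G \<subseteq> {c. length c = n \<and> \<not> gf2_inner c x}"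
    if "length x = n" "\<forall>h\<in>set G. \<not> gf2_inner h x" for x
    using that assms by (intro gf2_span_least) (auto simp: gf2_inner_add_left)
  then show ?thesis
    using assms by (auto simp: dual_code_def row_in_gf2_span)
qed

lemma zero_in_dual_code: "\<forall>c\<in>C. length c = n \<Longrightarrow> gf2_zero n \<in> dual_code n C"
  by (simp add: dual_code_def) (metis gf2_inner_zero_right)

lemma gf2_add_in_dual_code:
  "\<forall>c\<in>C. length c = n \<Longrightarrow> a \<in> dual_code n C \<Longrightarrow> b \<in> dual_code n C \<Longrightarrow> gf2_add a b \<in> dual_code n C"
  by (auto simp: dual_code_def gf2_inner_add_right)

definition block_check :: "nat \<Rightarrow> bool list list \<Rightarrow> bool list list \<Rightarrow> bool list list" where
  "block_check n A K =
     map (\<lambda>y. y @ gf2_zero n) A @ map (\<lambda>y. gf2_zero n @ y) A @ map (\<lambda>x. x @ x) K"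

lemma length_block_check [simp]: "length (block_check n A K) = 2 * length A + length K"
  by (simp add: block_check_def)

lemma gf2_span_block_check:
  assumes A: "\<forall>h\<in>set A. length h = n" and K: "\<forall>h\<in>set K. length h = n"
  shows "gf2_span (2 * n) (block_check n A K) =
    {gf2_add y x @ gf2_add z x | x y z. y \<in> gf2_span n A \<and> z \<in> gf2_span n A \<and> x \<in> gf2_span n K}"
proof -
  have sum: "gf2_add (y @ gf2_zero n) (gf2_add (gf2_zero n @ z) (x @ x)) = gf2_add y x @ gf2_add z x"
    if "y \<in> gf2_span n A" "z \<in> gf2_span n A" "x \<in> gf2_span n K" for x y z
    using that length_gf2_span[OF A] length_gf2_span[OF K] by (simp add: gf2_add_append)
  have len: "\<forall>h\<in>set (map (\<lambda>y. gf2_zero n @ y) A @ map (\<lambda>x. x @ x) K). length h = 2 * n"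
    using A K by auto
  have BC: "gf2_span (2 * n) (map (\<lambda>y. gf2_zero n @ y) A @ map (\<lambda>x. x @ x) K) =
      {gf2_add b c | b c. b \<in> (\<lambda>y. gf2_zero n @ y) ` gf2_span n A \<and> c \<in> (\<lambda>x. x @ x) ` gf2_span n K}"
    using A K len by (subst gf2_span_append) (simp_all add: gf2_span_double gf2_span_pad_left)
  have "gf2_span (2 * n) (block_check n A K) =
      {gf2_add a bc | a bc. a \<in> (\<lambda>y. y @ gf2_zero n) ` gf2_span n A \<and>
         bc \<in> gf2_span (2 * n) (map (\<lambda>y. gf2_zero n @ y) A @ map (\<lambda>x. x @ x) K)}"
    using A len unfolding block_check_def by (subst gf2_span_append) (simp_all add: gf2_span_pad_right)
  then have "gf2_span (2 * n) (block_check n A K) =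
      {gf2_add a (gf2_add b c) | a b c. a \<in> (\<lambda>y. y @ gf2_zero n) ` gf2_span n A \<and>
         b \<in> (\<lambda>y. gf2_zero n @ y) ` gf2_span n A \<and> c \<in> (\<lambda>x. x @ x) ` gf2_span n K}"
    unfolding BC by blast
  also have "\<dots> =
      {gf2_add y x @ gf2_add z x | x y z. y \<in> gf2_span n A \<and> z \<in> gf2_span n A \<and> x \<in> gf2_span n K}"
    (is "?L = ?R")
  proof (intro equalityI subsetI)
    fix w assume "w \<in> ?L"
    then show "w \<in> ?R"
      using sum by blast
  next
    fix w assume "w \<in> ?R"
    then obtain x y z where "y \<in> gf2_span n A" "z \<in> gf2_span n A" "x \<in> gf2_span n K"
      "w = gf2_add y x @ gf2_add z x"
      by blast
    then show "w \<in> ?L"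
      using sum[symmetric] by blast
  qed
  finally show ?thesis .
qed

lemma card_filter_append:
  assumes "S \<subseteq> {..<n}" "finite T" "length a = n"
  shows "card {j \<in> S \<union> (\<lambda>j. j + n) ` T. (a @ b) ! j} = card {j \<in> S. a ! j} + card {j \<in> T. b ! j}"
proof -
  have "{j \<in> S \<union> (\<lambda>j. j + n) ` T. (a @ b) ! j} = {j \<in> S. a ! j} \<union> (\<lambda>j. j + n) ` {j \<in> T. b ! j}"
    using assms by (auto simp: nth_append)
  moreover have "finite S"
    using assms(1) finite_subset by blast
  then have "card ({j \<in> S. a ! j} \<union> (\<lambda>j. j + n) ` {j \<in> T. b ! j}) =
      card {j \<in> S. a ! j} + card ((\<lambda>j. j + n) ` {j \<in> T. b ! j})"
    using assms by (intro card_Un_disjoint) auto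
  ultimately show ?thesis
    by (simp add: card_image)
qed

lemma split_index_set:
  fixes n :: nat
  assumes "S \<subseteq> {..<2 * n}"
  obtains S1 S2 where "S1 \<subseteq> {..<n}" "S2 \<subseteq> {..<n}" "S = S1 \<union> (\<lambda>j. j + n) ` S2"
    "card S = card S1 + card S2"
    "\<And>a b. length a = n \<Longrightarrow> card {j \<in> S. (a @ b) ! j} = card {j \<in> S1. a ! j} + card {j \<in> S2. b ! j}"
proof
  let ?S1 = "{j \<in> S. j < n}" and ?S2 = "{j. j + n \<in> S}"
  show sub: "?S1 \<subseteq> {..<n}" "?S2 \<subseteq> {..<n}"
    using assms by auto
  show S: "S = ?S1 \<union> (\<lambda>j. j + n) ` ?S2"
  proof (intro equalityI subsetI)
    fix x assume "x \<in> S"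
    then show "x \<in> ?S1 \<union> (\<lambda>j. j + n) ` ?S2"
      by (cases "x < n") (auto intro: image_eqI[where x = "x - n"])
  qed auto
  have fin: "finite ?S1" "finite ?S2"
    using sub finite_subset by blast+
  then have "card (?S1 \<union> (\<lambda>j. j + n) ` ?S2) = card ?S1 + card ((\<lambda>j. j + n) ` ?S2)"
    by (intro card_Un_disjoint) auto
  then show "card S = card ?S1 + card ?S2"
    using arg_cong[where f = card, OF S] by (simp add: card_image)
  fix a b :: "bool list" assume "length a = n"
  then show "card {j \<in> S. (a @ b) ! j} = card {j \<in> ?S1. a ! j} + card {j \<in> ?S2. b ! j}"
    using card_filter_append[OF sub(1) fin(2)] S by simp
qed

lemma card_filter_gf2_zero: "T \<subseteq> {..<n} \<Longrightarrow> card {j \<in> T. gf2_zero n ! j} = 0"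
proof -
  assume "T \<subseteq> {..<n}"
  then have empty: "{j \<in> T. gf2_zero n ! j} = {}"
    by auto
  show ?thesis
    unfolding empty by simp
qed

lemma split_card_cases:
  assumes "S1 \<noteq> {} \<or> S2 \<noteq> {}" "card S1 + card S2 < 2 * k"
  obtains (lower) "S1 \<noteq> {}" "card S1 < k"
    | (upper) "S2 \<noteq> {}" "card S2 < k"
    | (lower_only) "S1 \<noteq> {}" "S2 = {}" "k \<le> card S1" "card S1 < 2 * k"
    | (upper_only) "S1 = {}" "S2 \<noteq> {}" "k \<le> card S2" "card S2 < 2 * k"
  using assms by (cases "S1 = {}"; cases "S2 = {}") force+

lemma block_check_hits_once:
  fixes n k :: nat
  assumes len_A: "\<forall>h\<in>set A. length h = n" and len_K: "\<forall>h\<in>set K. length h = n"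
    and A: "\<And>T. T \<subseteq> {..<n} \<Longrightarrow> T \<noteq> {} \<Longrightarrow> card T < k \<Longrightarrow>
      \<exists>h\<in>set A. card {j \<in> T. h ! j} = 1"
    and K: "\<And>T. T \<subseteq> {..<n} \<Longrightarrow> T \<noteq> {} \<Longrightarrow> k \<le> card T \<Longrightarrow> card T < 2 * k \<Longrightarrow>
      \<exists>h\<in>set K. card {j \<in> T. h ! j} = 1"
    and S: "S \<subseteq> {..<2 * n}" "S \<noteq> {}" "card S < 2 * k"
  shows "\<exists>h\<in>set (block_check n A K). card {j \<in> S. h ! j} = 1"
proof -
  obtain S1 S2 where sub: "S1 \<subseteq> {..<n}" "S2 \<subseteq> {..<n}" and S_eq: "S = S1 \<union> (\<lambda>j. j + n) ` S2"
    and card_S: "card S = card S1 + card S2"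
    and hits: "\<And>a b. length a = n \<Longrightarrow> card {j \<in> S. (a @ b) ! j} = card {j \<in> S1. a ! j} + card {j \<in> S2. b ! j}"
    using split_index_set[OF S(1)] by blast
  have "S1 \<noteq> {} \<or> S2 \<noteq> {}" "card S1 + card S2 < 2 * k"
    using S_eq S(2,3) card_S by auto
  then show ?thesis
  proof (cases rule: split_card_cases)
    case lower
    then obtain y where "y \<in> set A" "card {j \<in> S1. y ! j} = 1"
      using A sub(1) by blast
    then show ?thesis
      using len_A hits card_filter_gf2_zero[OF sub(2)]
      by (intro bexI[of _ "y @ gf2_zero n"]) (auto simp: block_check_def)
  next
    case upper
    then obtain y where "y \<in> set A" "card {j \<in> S2. y ! j} = 1"
      using A sub(2) by blast
    then show ?thesis
      using len_A hits card_filter_gf2_zero[OF sub(1)]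
      by (intro bexI[of _ "gf2_zero n @ y"]) (auto simp: block_check_def)
  next
    case lower_only
    then obtain x where "x \<in> set K" "card {j \<in> S1. x ! j} = 1"
      using K sub(1) by blast
    then show ?thesis
      using len_K hits lower_only by (intro bexI[of _ "x @ x"]) (auto simp: block_check_def)
  next
    case upper_only
    then obtain x where "x \<in> set K" "card {j \<in> S2. x ! j} = 1"
      using K sub(2) by blast
    then show ?thesis
      using len_K hits upper_only by (intro bexI[of _ "x @ x"]) (auto simp: block_check_def)
  qed
qed

lemma length_RM_gen: "\<forall>h\<in>set (RM_gen r m). length h = 2 ^ m"
  by (induction m arbitrary: r) (auto simp: identity_rows_def)

lemma RM_gen_diag: "RM_gen m m = identity_rows (2 ^ m)"
  by (cases m) (auto simp: identity_rows_def)

lemma RM_gen_0: "RM_gen 0 m = [replicate (2 ^ m) True]"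
  by (cases m) (auto simp: replicate_add[symmetric] mult_2)

lemma RM_gen_Suc:
  "r \<le> m \<Longrightarrow> RM_gen r (Suc m) =
     map (\<lambda>u. u @ u) (RM_gen r m) @
     map (\<lambda>v. gf2_zero (2 ^ m) @ v) (if r = 0 then [] else RM_gen (r - 1) m)"
  by (cases "r = 0") (auto simp: RM_gen_0 replicate_add[symmetric] mult_2)

lemma RM_code_eq_gf2_span: "RM_code r m = gf2_span (2 ^ m) (RM_gen r m)"
  by (simp add: RM_code_def row_space_eq_gf2_span length_RM_gen)

lemma length_RM_code: "c \<in> RM_code r m \<Longrightarrow> length c = 2 ^ m"
  using length_gf2_span[OF length_RM_gen] by (simp add: RM_code_eq_gf2_span)

lemma RM_code_Suc:
  assumes "r \<le> m"
  shows "RM_code r (Suc m) =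
    {u @ gf2_add u v | u v. u \<in> RM_code r m \<and>
                            v \<in> (if r = 0 then {gf2_zero (2 ^ m)} else RM_code (r - 1) m)}"
proof -
  have "RM_code r (Suc m) = gf2_span (2 * 2 ^ m)
      (map (\<lambda>u. u @ u) (RM_gen r m) @
       map (\<lambda>v. gf2_zero (2 ^ m) @ v) (if r = 0 then [] else RM_gen (r - 1) m))"
    unfolding RM_code_eq_gf2_span RM_gen_Suc[OF assms] by simp
  also have "\<dots> = {u @ gf2_add u v | u v. u \<in> RM_code r m \<and>
      v \<in> gf2_span (2 ^ m) (if r = 0 then [] else RM_gen (r - 1) m)}"
    by (subst gf2_span_plotkin) (simp_all add: length_RM_gen RM_code_eq_gf2_span)
  finally show ?thesis
    by (simp add: RM_code_eq_gf2_span)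
qed

abbreviation RM_dual :: "nat \<Rightarrow> nat \<Rightarrow> bool list set" where
  "RM_dual r m \<equiv> dual_code (2 ^ m) (RM_code r m)"

lemma length_RM_dual: "x \<in> RM_dual r m \<Longrightarrow> length x = 2 ^ m"
  by (simp add: dual_code_def)

lemma zero_in_RM_dual: "gf2_zero (2 ^ m) \<in> RM_dual r m"
  by (simp add: zero_in_dual_code length_RM_code)

lemma gf2_add_in_RM_dual: "a \<in> RM_dual r m \<Longrightarrow> b \<in> RM_dual r m \<Longrightarrow> gf2_add a b \<in> RM_dual r m"
  by (simp add: gf2_add_in_dual_code length_RM_code)

lemma RM_dual_append_iff:
  assumes "r \<le> m" "length a = 2 ^ m" "length b = 2 ^ m"
  shows "a @ b \<in> RM_dual r (Suc m) \<longleftrightarrow>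
           gf2_add a b \<in> RM_dual r m \<and> (0 < r \<longrightarrow> b \<in> RM_dual (r - 1) m)"
proof -
  define V where "V = (if r = 0 then {gf2_zero (2 ^ m)} else RM_code (r - 1) m)"
  have len_V: "length v = 2 ^ m" if "v \<in> V" for v
    using that by (auto simp: V_def length_RM_code split: if_splits)
  have inner: "gf2_inner (u @ gf2_add u v) (a @ b) \<longleftrightarrow> gf2_inner u (gf2_add a b) \<noteq> gf2_inner v b"
    if "u \<in> RM_code r m" "v \<in> V" for u v
    using assms length_RM_code[OF that(1)] len_V[OF that(2)]
    by (simp add: gf2_inner_append gf2_inner_add_left gf2_inner_add_right) blast
  have "a @ b \<in> RM_dual r (Suc m) \<longleftrightarrow>
      (\<forall>u\<in>RM_code r m. \<forall>v\<in>V. \<not> gf2_inner (u @ gf2_add u v) (a @ b))"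
    using assms unfolding dual_code_def RM_code_Suc[OF assms(1)] V_def by auto
  also have "\<dots> \<longleftrightarrow> (\<forall>u\<in>RM_code r m. \<forall>v\<in>V. gf2_inner u (gf2_add a b) \<longleftrightarrow> gf2_inner v b)"
    using inner by simp
  also have "\<dots> \<longleftrightarrow> (\<forall>u\<in>RM_code r m. \<not> gf2_inner u (gf2_add a b)) \<and> (\<forall>v\<in>V. \<not> gf2_inner v b)"
  proof -
    have "gf2_zero (2 ^ m) \<in> RM_code r m" "gf2_zero (2 ^ m) \<in> V"
      by (auto simp: V_def RM_code_eq_gf2_span zero_in_gf2_span)
    then show ?thesis
      by fastforce
  qed
  also have "\<dots> \<longleftrightarrow> gf2_add a b \<in> RM_dual r m \<and> (0 < r \<longrightarrow> b \<in> RM_dual (r - 1) m)"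
    using assms by (auto simp: dual_code_def V_def)
  finally show ?thesis .
qed

lemma gf2_inner_identity_row:
  assumes "length x = n" "i < n"
  shows "gf2_inner (map (\<lambda>j. i = j) [0..<n]) x = x ! i"
proof -
  have "{j. j < n \<and> map (\<lambda>j. i = j) [0..<n] ! j \<and> x ! j} = (if x ! i then {i} else {})"
    using assms(2) by auto
  then show ?thesis
    by (simp add: gf2_inner_def)
qed

lemma identity_row_in_RM_code_diag: "i < 2 ^ m \<Longrightarrow> map (\<lambda>j. i = j) [0..<2 ^ m] \<in> RM_code m m"
proof -
  assume "i < 2 ^ m"
  then have "map (\<lambda>j. i = j) [0..<2 ^ m] \<in> set (RM_gen m m)"
    unfolding RM_gen_diag identity_rows_def set_map by (intro image_eqI[where x = i]) auto
  then show ?thesis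
    unfolding RM_code_eq_gf2_span by (rule row_in_gf2_span[OF length_RM_gen])
qed

lemma RM_dual_diag: "RM_dual m m = {gf2_zero (2 ^ m)}"
proof -
  have "x = gf2_zero (2 ^ m)" if x: "x \<in> RM_dual m m" for x
  proof (rule nth_equalityI)
    have len: "length x = 2 ^ m"
      using x by (rule length_RM_dual)
    then show "length x = length (gf2_zero (2 ^ m))"
      by simp
    fix i assume "i < length x"
    then have "map (\<lambda>j. i = j) [0..<2 ^ m] \<in> RM_code m m"
      using len by (simp add: identity_row_in_RM_code_diag)
    then have "\<not> gf2_inner (map (\<lambda>j. i = j) [0..<2 ^ m]) x"
      using x by (simp add: dual_code_def)
    then show "x ! i = gf2_zero (2 ^ m) ! i"
      using \<open>i < length x\<close> len by (simp add: gf2_inner_identity_row)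
  qed
  then show ?thesis
    using zero_in_RM_dual by blast
qed

lemma RM_dual_antimono: "0 < r \<Longrightarrow> r \<le> m \<Longrightarrow> RM_dual r m \<subseteq> RM_dual (r - 1) m"
proof (induction m arbitrary: r)
  case (Suc m)
  show ?case
  proof (cases "r = Suc m")
    case True
    then show ?thesis
      using RM_dual_diag[of "Suc m"] zero_in_RM_dual[where m = "Suc m" and r = m] by simp
  next
    case False
    then have r: "r \<le> m" "r - 1 \<le> m"
      using Suc.prems by simp_all
    show ?thesis
    proof
      fix x assume x: "x \<in> RM_dual r (Suc m)"
      obtain a b where ab: "x = a @ b" "length a = 2 ^ m" "length b = 2 ^ m"
        using length_RM_dual[OF x] by (auto elim: obtain_halves)
      have "a @ b \<in> RM_dual r (Suc m)"
        using x ab(1) by simp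
      then have sum: "gf2_add a b \<in> RM_dual r m" and b: "b \<in> RM_dual (r - 1) m"
        using Suc.prems(1) RM_dual_append_iff[OF r(1) ab(2,3)] by blast+
      have "gf2_add a b \<in> RM_dual (r - 1) m"
        using Suc.IH[OF Suc.prems(1) r(1)] sum by blast
      moreover have "b \<in> RM_dual (r - 1 - 1) m" if "0 < r - 1"
        using Suc.IH[OF that r(2)] b by blast
      ultimately show "x \<in> RM_dual (r - 1) (Suc m)"
        unfolding ab(1) RM_dual_append_iff[OF r(2) ab(2,3)] by blast
    qed
  qed
qed simp

lemma RM_dual_0: "RM_dual 0 m = {x. length x = 2 ^ m \<and> \<not> gf2_inner (replicate (2 ^ m) True) x}"
  using dual_code_gf2_span[of "[replicate (2 ^ m) True]" "2 ^ m"]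
  by (simp add: RM_code_eq_gf2_span RM_gen_0 del: gf2_span.simps)

definition unit_word :: "nat \<Rightarrow> bool list" where
  "unit_word n = map (\<lambda>j. j = 0) [0..<n]"

lemma length_unit_word [simp]: "length (unit_word n) = n"
  by (simp add: unit_word_def)

lemma gf2_inner_ones_unit_word: "0 < n \<Longrightarrow> gf2_inner (replicate n True) (unit_word n)"
proof -
  assume "0 < n"
  then have "{i. i < n \<and> replicate n True ! i \<and> unit_word n ! i} = {0}"
    by (auto simp: unit_word_def)
  then show ?thesis
    by (simp add: gf2_inner_def)
qed

lemma RM_dual_0_append:
  assumes len: "length a = 2 ^ m" "length b = 2 ^ m" and ab: "a @ b \<in> RM_dual 0 (Suc m)"
  obtains x where "x \<in> {gf2_zero (2 ^ m), unit_word (2 ^ m)}"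
    "gf2_add a x \<in> RM_dual 0 m" "gf2_add b x \<in> RM_dual 0 m"
proof -
  let ?e = "unit_word (2 ^ m)"
  have sum: "gf2_add a b \<in> RM_dual 0 m"
    using ab RM_dual_append_iff[of 0 m a b] len by simp
  show ?thesis
  proof (cases "b \<in> RM_dual 0 m")
    case True
    have "gf2_add (gf2_add a b) b \<in> RM_dual 0 m"
      using sum True by (rule gf2_add_in_RM_dual)
    then show ?thesis
      using True len that[of "gf2_zero (2 ^ m)"] by simp
  next
    case False
    then have "gf2_add b ?e \<in> RM_dual 0 m"
      using len gf2_inner_ones_unit_word[of "2 ^ m"]
      by (simp add: RM_dual_0 gf2_inner_add_right)
    moreover from this have "gf2_add (gf2_add a b) (gf2_add b ?e) \<in> RM_dual 0 m"
      using sum by (rule gf2_add_in_RM_dual[rotated])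
    moreover have "gf2_add (gf2_add a b) (gf2_add b ?e) = gf2_add a ?e"
      using len by (intro nth_equalityI) auto
    ultimately show ?thesis
      using that[of ?e] by simp
  qed
qed

lemma append_in_RM_dual_Suc:
  assumes "r \<le> m" "y \<in> RM_dual r m" "z \<in> RM_dual r m" "length x = 2 ^ m"
    and "0 < r \<Longrightarrow> x \<in> RM_dual (r - 1) m"
  shows "gf2_add y x @ gf2_add z x \<in> RM_dual r (Suc m)"
proof -
  have len: "length y = 2 ^ m" "length z = 2 ^ m"
    using assms(2,3) length_RM_dual by blast+
  have "gf2_add (gf2_add y x) (gf2_add z x) = gf2_add y z"
    using len assms(4) by (intro nth_equalityI) auto
  moreover have "gf2_add z x \<in> RM_dual (r - 1) m" if "0 < r"
    using RM_dual_antimono[OF that assms(1)] assms(3,5) that by (auto intro: gf2_add_in_RM_dual)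
  ultimately show ?thesis
    using RM_dual_append_iff[OF assms(1)] assms(2-4) len by (simp add: gf2_add_in_RM_dual)
qed

lemma RM_dual_Suc:
  assumes "r \<le> m"
  shows "RM_dual r (Suc m) =
    {gf2_add y x @ gf2_add z x | x y z. y \<in> RM_dual r m \<and> z \<in> RM_dual r m \<and>
       x \<in> (if r = 0 then {gf2_zero (2 ^ m), unit_word (2 ^ m)} else RM_dual (r - 1) m)}"
    (is "_ = ?S")
proof (intro equalityI subsetI)
  let ?e = "unit_word (2 ^ m)"
  fix w assume w: "w \<in> RM_dual r (Suc m)"
  obtain a b where ab: "w = a @ b" "length a = 2 ^ m" "length b = 2 ^ m"
    using length_RM_dual[OF w] by (auto elim: obtain_halves)
  have sum: "gf2_add a b \<in> RM_dual r m" and b: "0 < r \<Longrightarrow> b \<in> RM_dual (r - 1) m"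
    using w ab RM_dual_append_iff[OF assms ab(2,3)] by simp_all
  obtain x where x: "x \<in> (if r = 0 then {gf2_zero (2 ^ m), ?e} else RM_dual (r - 1) m)"
    and sums: "gf2_add a x \<in> RM_dual r m" "gf2_add b x \<in> RM_dual r m"
  proof (cases "r = 0")
    case True
    from ab(2,3) w[unfolded ab(1) True] show ?thesis
      by (rule RM_dual_0_append) (use that True in simp)
  next
    case False
    then show ?thesis
      using that[of b] sum b ab(3) zero_in_RM_dual[of m r] by simp
  qed
  moreover have "length x = 2 ^ m"
    using x length_RM_dual by (auto split: if_splits)
  then have "w = gf2_add (gf2_add a x) x @ gf2_add (gf2_add b x) x"
    using ab by simp
  ultimately show "w \<in> ?S"
    by blast
next
  fix w assume "w \<in> ?S"
  then obtain x y z where "w = gf2_add y x @ gf2_add z x" "y \<in> RM_dual r m" "z \<in> RM_dual r m"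
    and x: "x \<in> (if r = 0 then {gf2_zero (2 ^ m), unit_word (2 ^ m)} else RM_dual (r - 1) m)"
    by blast
  moreover have "length x = 2 ^ m"
    using x length_RM_dual by (auto split: if_splits)
  ultimately show "w \<in> RM_dual r (Suc m)"
    using x append_in_RM_dual_Suc[OF assms] by (metis neq0_conv)
qed

fun RM_check :: "nat \<Rightarrow> nat \<Rightarrow> bool list list" where
  "RM_check r 0 = []"
| "RM_check r (Suc m) =
     (if Suc m \<le> r then []
      else block_check (2 ^ m) (RM_check r m)
             (if r = 0 then [unit_word (2 ^ m)] else RM_check (r - 1) m))"

lemma length_RM_check_rows: "\<forall>h\<in>set (RM_check r m). length h = 2 ^ m"
  by (induction m arbitrary: r) (auto simp: block_check_def)

lemma gf2_span_RM_check: "r \<le> m \<Longrightarrow> gf2_span (2 ^ m) (RM_check r m) = RM_dual r m"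
proof (induction m arbitrary: r)
  case 0
  then show ?case
    using RM_dual_diag[of 0] by simp
next
  case (Suc m)
  show ?case
  proof (cases "r = Suc m")
    case True
    then show ?thesis
      using RM_dual_diag[of "Suc m"] by simp
  next
    case False
    then have r: "r \<le> m"
      using Suc.prems by simp
    define K where "K = (if r = 0 then [unit_word (2 ^ m)] else RM_check (r - 1) m)"
    have span_K: "gf2_span (2 ^ m) K =
        (if r = 0 then {gf2_zero (2 ^ m), unit_word (2 ^ m)} else RM_dual (r - 1) m)"
      using Suc.IH[of "r - 1"] r by (auto simp: K_def)
    have "gf2_span (2 ^ Suc m) (RM_check r (Suc m)) = gf2_span (2 * 2 ^ m) (block_check (2 ^ m) (RM_check r m) K)"
      using r by (simp add: K_def)
    also have "\<dots> = RM_dual r (Suc m)"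
    proof -
      have len_K: "\<forall>h\<in>set K. length h = 2 ^ m"
        using length_RM_check_rows by (simp add: K_def)
      show ?thesis
        unfolding gf2_span_block_check[OF length_RM_check_rows len_K] RM_dual_Suc[OF r] Suc.IH[OF r] span_K
        by simp
    qed
    finally show ?thesis .
  qed
qed

definition redundancy_bound :: "nat \<Rightarrow> nat \<Rightarrow> nat" where
  "redundancy_bound r k = (\<Sum>i = 0..<k. ((r + i) choose i) * 2 ^ i)"

lemma redundancy_bound_Suc:
  "redundancy_bound r (Suc k) =
     2 * redundancy_bound r k + (if r = 0 then 1 else redundancy_bound (r - 1) (Suc k))"
proof (induction k)
  case 0
  then show ?case
    by (simp add: redundancy_bound_def)
next
  case (Suc k)
  have step: "redundancy_bound r' (Suc (Suc k)) =
      redundancy_bound r' (Suc k) + ((r' + Suc k) choose Suc k) * 2 ^ Suc k" for r'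
    by (simp add: redundancy_bound_def)
  show ?case
  proof (cases "r = 0")
    case True
    then show ?thesis
      using Suc step[of 0] by (simp add: redundancy_bound_def)
  next
    case False
    have "redundancy_bound r (Suc (Suc k)) =
        2 * redundancy_bound r k + redundancy_bound (r - 1) (Suc k) + ((r + Suc k) choose Suc k) * 2 ^ Suc k"
      using Suc False step[of r] by simp
    also have "\<dots> = 2 * redundancy_bound r (Suc k) + redundancy_bound (r - 1) (Suc (Suc k))"
      using step[of "r - 1"] False by (simp add: redundancy_bound_def algebra_simps)
    finally show ?thesis
      using False by simp
  qed
qed

lemma length_RM_check: "r \<le> m \<Longrightarrow> length (RM_check r m) = redundancy_bound r (m - r)"
proof (induction m arbitrary: r)
  case 0
  then show ?case
    by (simp add: redundancy_bound_def)
next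
  case (Suc m)
  show ?case
  proof (cases "r = Suc m")
    case True
    then show ?thesis
      by (simp add: redundancy_bound_def)
  next
    case False
    then have r: "r \<le> m" and m_r: "Suc m - r = Suc (m - r)"
      using Suc.prems by simp_all
    have "length (RM_check r (Suc m)) =
        2 * length (RM_check r m) + (if r = 0 then 1 else length (RM_check (r - 1) m))"
      using r by simp
    moreover have "m - (r - 1) = Suc (m - r)" if "r \<noteq> 0"
      using that r by simp
    ultimately show ?thesis
      using Suc.IH[OF r] Suc.IH[of "r - 1"] r by (simp add: m_r redundancy_bound_Suc)
  qed
qed

lemma card_unit_word_full:
  assumes "T \<subseteq> {..<n}" "n \<le> card T" "0 < n"
  shows "card {j \<in> T. unit_word n ! j} = 1"
proof -
  have "T = {..<n}"
    using assms(1,2) card_mono[of "{..<n}" T] by (intro card_subset_eq) auto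
  then have "{j \<in> T. unit_word n ! j} = {0}"
    using assms(3) by (auto simp: unit_word_def)
  then show ?thesis
    by simp
qed

lemma RM_check_hits_once:
  assumes "r \<le> m" "S \<subseteq> {..<2 ^ m}" "S \<noteq> {}" "card S < 2 ^ (m - r)"
  shows "\<exists>h\<in>set (RM_check r m). card {j \<in> S. h ! j} = 1"
  using assms
proof (induction m arbitrary: r S)
  case 0
  then have "finite S" "card S = 0"
    using finite_subset by auto
  then show ?case
    using "0.prems"(3) by simp
next
  case (Suc m)
  have "finite S"
    using Suc.prems(2) finite_subset by blast
  then have r: "r \<le> m"
    using Suc.prems(1,3,4) by (cases "r = Suc m") auto
  define K where "K = (if r = 0 then [unit_word (2 ^ m)] else RM_check (r - 1) m)"
  have len_K: "\<forall>h\<in>set K. length h = 2 ^ m"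
    using length_RM_check_rows by (simp add: K_def)
  have K: "\<exists>h\<in>set K. card {j \<in> T. h ! j} = 1"
    if "T \<subseteq> {..<2 ^ m}" "T \<noteq> {}" "2 ^ (m - r) \<le> card T" "card T < 2 * 2 ^ (m - r)" for T
  proof (cases "r = 0")
    case True
    then show ?thesis
      using that card_unit_word_full[of T "2 ^ m"] by (simp add: K_def)
  next
    case False
    then have "m - (r - 1) = Suc (m - r)"
      using r by simp
    then show ?thesis
      using Suc.IH[of "r - 1" T] that False by (simp add: K_def)
  qed
  have "Suc m - r = Suc (m - r)"
    using r by simp
  then have "\<exists>h\<in>set (block_check (2 ^ m) (RM_check r m) K). card {j \<in> S. h ! j} = 1"
    using Suc.prems(2-4) by (intro block_check_hits_once[OF length_RM_check_rows len_K Suc.IH[OF r] K]) auto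
  then show ?case
    using r by (simp add: K_def)
qed

lemma stop_ok_RM_check:
  assumes "r \<le> m"
  shows "stop_ok (2 ^ m) (RM_check r m) (2 ^ (m - r))"
  unfolding stop_ok_def
proof (intro allI impI)
  fix S :: "nat set"
  assume S: "S \<subseteq> {..<2 ^ m} \<and> S \<noteq> {} \<and> card S \<le> 2 ^ (m - r) - 1"
  then have "0 < card S"
    using finite_subset by (auto simp: card_gt_0_iff)
  with S show "\<exists>h\<in>set (RM_check r m). card {j \<in> S. h ! j} = 1"
    using assms by (intro RM_check_hits_once) auto
qed

lemma is_parity_check_RM_check: "r \<le> m \<Longrightarrow> is_parity_check (2 ^ m) (RM_code r m) (RM_check r m)"
  by (simp add: is_parity_check_def length_RM_check_rows row_space_eq_gf2_span gf2_span_RM_check)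

lemma hweight_eq_card: "hweight w = card {i. i < length w \<and> w ! i}"
  by (simp add: hweight_def length_filter_conv_card)

lemma ones_in_RM_code_0: "replicate (2 ^ m) True \<in> RM_code 0 m"
  using length_RM_gen[of 0 m] by (simp add: RM_code_eq_gf2_span RM_gen_0)

lemma RM_code_min_weight_word: "r \<le> m \<Longrightarrow> \<exists>c\<in>RM_code r m. hweight c = 2 ^ (m - r)"
proof (induction m arbitrary: r)
  case 0
  then show ?case
    using ones_in_RM_code_0[of 0] by (intro bexI[of _ "replicate (2 ^ 0) True"]) (auto simp: hweight_def)
next
  case (Suc m)
  consider "r = 0" | "r = Suc m" | "0 < r" "r \<le> m"
    using Suc.prems by linarith
  then show ?case
  proof cases
    case 1
    then show ?thesis
      using ones_in_RM_code_0[of "Suc m"]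
      by (intro bexI[of _ "replicate (2 ^ Suc m) True"]) (auto simp: hweight_def)
  next
    case 2
    let ?e = "map (\<lambda>j. 0 = j) [0..<2 ^ Suc m]"
    have "?e \<in> RM_code (Suc m) (Suc m)"
      by (rule identity_row_in_RM_code_diag) simp
    moreover have "{i. i < length ?e \<and> ?e ! i} = {0}"
      by auto
    ultimately show ?thesis
      using 2 by (intro bexI[of _ ?e]) (simp_all add: hweight_eq_card)
  next
    case 3
    then have "r - 1 \<le> m" "m - (r - 1) = Suc m - r"
      by simp_all
    then obtain w where w: "w \<in> RM_code (r - 1) m" "hweight w = 2 ^ (Suc m - r)"
      using Suc.IH[of "r - 1"] by metis
    have "gf2_zero (2 ^ m) \<in> RM_code r m"
      by (simp add: RM_code_eq_gf2_span zero_in_gf2_span)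
    then have "gf2_zero (2 ^ m) @ gf2_add (gf2_zero (2 ^ m)) w \<in> RM_code r (Suc m)"
      unfolding RM_code_Suc[OF 3(2)] using w(1) 3(1) by auto
    moreover have "hweight (gf2_zero (2 ^ m) @ w) = 2 ^ (Suc m - r)"
      using w(2) by (simp add: hweight_def)
    ultimately show ?thesis
      using length_RM_code[OF w(1)] by auto
  qed
qed

lemma min_distance_le:
  "c \<in> C \<Longrightarrow> c \<noteq> gf2_zero n \<Longrightarrow> min_distance n C \<le> hweight c"
  unfolding min_distance_def by (rule Least_le) blast

lemma stop_ok_mono:
  assumes "stop_ok n H s" "s' \<le> s"
  shows "stop_ok n H s'"
  unfolding stop_ok_def
proof (intro allI impI)
  fix S assume S: "S \<subseteq> {..<n} \<and> S \<noteq> {} \<and> card S \<le> s' - 1"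
  then have "card S \<le> s - 1"
    using assms(2) by linarith
  with S show "\<exists>h\<in>set H. card {j \<in> S. h ! j} = 1"
    using assms(1) unfolding stop_ok_def by blast
qed

text \<open>Every parity check meets the support of a codeword in an even number of positions.\<close>
lemma not_stop_ok_Suc_hweight:
  assumes H: "is_parity_check n C H" and c: "c \<in> C" "length c = n" "c \<noteq> gf2_zero n"
  shows "\<not> stop_ok n H (Suc (hweight c))"
proof
  let ?S = "{j. j < n \<and> c ! j}"
  assume stop: "stop_ok n H (Suc (hweight c))"
  have "?S \<subseteq> {..<n}" "?S \<noteq> {}" "card ?S \<le> Suc (hweight c) - 1"
    using c(2,3) by (auto simp: hweight_eq_card intro!: nth_equalityI)
  then obtain h where h: "h \<in> set H" "card {j \<in> ?S. h ! j} = 1"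
    using stop unfolding stop_ok_def by blast
  have "\<forall>g\<in>set H. length g = n"
    using H by (simp add: is_parity_check_def)
  then have "h \<in> row_space n H"
    using h(1) by (simp add: row_space_eq_gf2_span row_in_gf2_span)
  then have "\<not> gf2_inner c h"
    using H c(1) by (simp add: is_parity_check_def dual_code_def)
  moreover have "{j \<in> ?S. h ! j} = {i. i < length c \<and> c ! i \<and> h ! i}"
    using c(2) by auto
  ultimately show False
    using h(2) by (simp add: gf2_inner_def)
qed

lemma stopping_redundancy_le:
  assumes H: "is_parity_check n C H" and stop: "stop_ok n H (min_distance n C)"
    and C: "\<forall>c\<in>C. length c = n" "\<exists>c\<in>C. c \<noteq> gf2_zero n"
  shows "stopping_redundancy n C \<le> length H"
proof -
  obtain c where c: "c \<in> C" "c \<noteq> gf2_zero n" "hweight c = min_distance n C"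
    using C(2) LeastI_ex[of "\<lambda>w. \<exists>c\<in>C. c \<noteq> gf2_zero n \<and> hweight c = w"]
    unfolding min_distance_def by blast
  then have "stopping_distance_is n H (min_distance n C)"
    using stop not_stop_ok_Suc_hweight[OF H c(1) _ c(2)] C(1)
    by (simp add: stopping_distance_is_def)
  then show ?thesis
    unfolding stopping_redundancy_def using H by (intro Least_le) blast
qed

theorem theorem14:
  fixes m r :: nat
  assumes "1 \<le> m" and "r \<le> m"
  shows "stopping_redundancy (2 ^ m) (RM_code r m)
           \<le> (\<Sum>i = 0..<m - r. ((r + i) choose i) * 2 ^ i)"
proof -
  obtain c where c: "c \<in> RM_code r m" "hweight c = 2 ^ (m - r)"
    using RM_code_min_weight_word[OF assms(2)] by blast
  then have nonzero: "c \<noteq> gf2_zero (2 ^ m)"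
    by (auto simp: hweight_def)
  then have "min_distance (2 ^ m) (RM_code r m) \<le> 2 ^ (m - r)"
    using min_distance_le[OF c(1)] c(2) by simp
  then have "stop_ok (2 ^ m) (RM_check r m) (min_distance (2 ^ m) (RM_code r m))"
    using stop_ok_RM_check[OF assms(2)] by (rule stop_ok_mono[rotated])
  then have "stopping_redundancy (2 ^ m) (RM_code r m) \<le> length (RM_check r m)"
    using is_parity_check_RM_check[OF assms(2)] length_RM_code c(1) nonzero
    by (blast intro: stopping_redundancy_le)
  also have "\<dots> = redundancy_bound r (m - r)"
    using assms(2) by (rule length_RM_check)
  finally show ?thesis
    by (simp add: redundancy_bound_def)
qed

end
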